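(* Let $R_t\in\mathbb R^{K\times K}$ and $M_t\in\mathbb R^{d\times d}$ be symmetric positive definite, $G_t\in\mathbb R^{K\times d}$, $r_t^\star,\varepsilon_t^\theta\in\mathbb R^K$, $r_t=r_t^\star-\varepsilon_t^\theta$, and $\ell_t(u;r)=\frac12\|r-G_tu\|^2_{R_t^{-1}}$. Assume $\|\varepsilon_t^\theta\|_{R_t^{-1}}\le B_t^\theta$ and $G_t^\top R_t^{-1}G_t\preceq\alpha_tM_t$ for some $B_t^\theta\ge0$, $\alpha_t\ge0$. Then for every pair $m,v\in\mathbb R^d$, $$\ell_t(m;r_t)-\ell_t(v;r_t)\le\ell_t(m;r_t^\star)-\ell_t(v;r_t^\star)+\frac{\alpha_t}{2}\|m-v\|^2_{M_t}+\frac12(B_t^\theta)^2.$$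
   Context: $\|a\|^2_{M}=a^\top Ma$; $\preceq$ is the Loewner order. In the application, $M_t$ is the pre-update precision of the discrepancy state, $r_t^\star$ the residual against the oracle projected simulator anchor, $\varepsilon_t^\theta$ the anchor error, and $r_t$ the residual used by the discrepancy update. *)

theory Defs
  imports "HOL-Analysis.Analysis"
begin

definition wnorm2 :: "real^'n \<Rightarrow> real^'n^'n \<Rightarrow> real" where
  "wnorm2 a M = a \<bullet> (M *v a)"

definition symmetric_pd :: "real^'n^'n \<Rightarrow> bool" where
  "symmetric_pd M \<longleftrightarrow> transpose M = M \<and> (\<forall>x. x \<noteq> 0 \<longrightarrow> x \<bullet> (M *v x) > 0)"

definition loewner_le :: "real^'n^'n \<Rightarrow> real^'n^'n \<Rightarrow> bool" where
  "loewner_le A B \<longleftrightarrow> (\<forall>x. x \<bullet> ((B - A) *v x) \<ge> 0)"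

definition loss :: "real^'k^'k \<Rightarrow> real^'d^'k \<Rightarrow> real^'d \<Rightarrow> real^'k \<Rightarrow> real" where
  "loss R G u r = (1/2) * wnorm2 (r - G *v u) (matrix_inv R)"

end

theory Submission
  imports Defs
begin

text \<open>Write \<open>P = R\<^sup>-\<^sup>1\<close>, \<open>a = r\<^sup>\<star> - G m\<close>, \<open>b = r\<^sup>\<star> - G v\<close>. Replacing \<open>r\<^sup>\<star>\<close> by
  \<open>r = r\<^sup>\<star> - \<epsilon>\<close> shifts both residuals by the same \<open>\<epsilon>\<close>, so the loss difference changes
  only by the cross term \<open>\<langle>b - a, \<epsilon>\<rangle>\<^sub>P\<close>. As \<open>P\<close> is positive semidefinite, Young's
  inequality bounds it by \<open>(\<parallel>b - a\<parallel>\<^sub>P\<^sup>2 + \<parallel>\<epsilon>\<parallel>\<^sub>P\<^sup>2) / 2\<close>; and \<open>b - a = G (m - v)\<close>, so the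
  Loewner hypothesis gives \<open>\<parallel>b - a\<parallel>\<^sub>P\<^sup>2 \<le> \<alpha> \<parallel>m - v\<parallel>\<^sub>M\<^sup>2\<close>.\<close>

lemma matrix_inv_right:
  fixes A :: "'a::semiring_1^'n^'n"
  assumes "invertible A"
  shows "A ** matrix_inv A = mat 1"
  using someI_ex[OF assms[unfolded invertible_def]] unfolding matrix_inv_def by blast

lemma symmetric_pd_invertible:
  assumes "symmetric_pd R"
  shows "invertible R"
proof -
  have "y = 0" if "R *v y = 0" for y
    using assms that unfolding symmetric_pd_def by (metis inner_zero_right less_irrefl)
  then show ?thesis
    using matrix_left_invertible_ker invertible_left_inverse by blast
qed

lemma symmetric_pd_inverse_nonneg:
  assumes "symmetric_pd R"
  shows "0 \<le> wnorm2 x (matrix_inv R)"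
proof -
  define y where "y = matrix_inv R *v x"
  have x_eq: "x = R *v y"
    unfolding y_def matrix_vector_mul_assoc
      matrix_inv_right[OF symmetric_pd_invertible[OF assms]] by simp
  have "wnorm2 x (matrix_inv R) = (R *v y) \<bullet> y"
    unfolding wnorm2_def y_def[symmetric] by (simp add: x_eq)
  also have "\<dots> = y \<bullet> (R *v y)"
    by (rule inner_commute)
  also have "\<dots> \<ge> 0"
    using assms unfolding symmetric_pd_def by (cases "y = 0") (auto intro: less_imp_le)
  finally show ?thesis .
qed

lemma wnorm2_diff:
  "wnorm2 (x - y) P = wnorm2 x P - x \<bullet> (P *v y) - y \<bullet> (P *v x) + wnorm2 y P"
  unfolding wnorm2_def
  by (simp add: matrix_vector_mult_diff_distrib inner_diff_left inner_diff_right)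

lemma wnorm2_scaleR: "wnorm2 x (c *\<^sub>R M) = c * wnorm2 x M"
  unfolding wnorm2_def by (simp add: scaleR_matrix_vector_assoc[symmetric])

lemma wnorm2_congruence:
  "wnorm2 w (transpose G ** P ** G) = wnorm2 (G *v w) P"
proof -
  have "wnorm2 w (transpose G ** P ** G) = w \<bullet> (transpose G *v (P *v (G *v w)))"
    unfolding wnorm2_def by (simp add: matrix_vector_mul_assoc matrix_mul_assoc)
  also have "\<dots> = (w v* transpose G) \<bullet> (P *v (G *v w))"
    by (simp only: dot_lmul_matrix)
  finally show ?thesis
    unfolding wnorm2_def by simp
qed

lemma loewner_le_wnorm2:
  assumes "loewner_le A B"
  shows "wnorm2 x A \<le> wnorm2 x B"
proof -
  have "0 \<le> x \<bullet> ((B - A) *v x)"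
    using assms unfolding loewner_le_def ..
  also have "\<dots> = wnorm2 x B - wnorm2 x A"
    unfolding wnorm2_def by (simp add: matrix_vector_mult_diff_rdistrib inner_diff_right)
  finally show ?thesis by simp
qed

lemma wnorm2_cross_le:
  assumes "\<And>z. 0 \<le> wnorm2 z P"
  shows "x \<bullet> (P *v y) + y \<bullet> (P *v x) \<le> wnorm2 x P + wnorm2 y P"
  using assms[of "x - y"] by (simp add: wnorm2_diff)

lemma wnorm2_shift_diff_le:
  assumes "\<And>z. 0 \<le> wnorm2 z P"
  shows "wnorm2 (a - e) P - wnorm2 (b - e) P
    \<le> wnorm2 a P - wnorm2 b P + wnorm2 (b - a) P + wnorm2 e P"
proof -
  have "wnorm2 (a - e) P - wnorm2 (b - e) P
      = wnorm2 a P - wnorm2 b P + ((b - a) \<bullet> (P *v e) + e \<bullet> (P *v (b - a)))"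
    by (simp add: wnorm2_diff matrix_vector_mult_diff_distrib inner_diff_left inner_diff_right)
  with wnorm2_cross_le[OF assms, of "b - a" e] show ?thesis by linarith
qed

theorem corollary2:
  fixes R :: "real^'k^'k" and M :: "real^'d^'d" and G :: "real^'d^'k"
    and rstar eps r :: "real^'k" and B alpha :: real
  assumes "symmetric_pd R" and "symmetric_pd M"
    and "r = rstar - eps"
    and "B \<ge> 0" and "alpha \<ge> 0"
    and "sqrt (wnorm2 eps (matrix_inv R)) \<le> B"
    and "loewner_le (transpose G ** matrix_inv R ** G) (alpha *\<^sub>R M)"
  shows "\<forall>m v :: real^'d.
    loss R G m r - loss R G v r
      \<le> loss R G m rstar - loss R G v rstar + alpha / 2 * wnorm2 (m - v) M + (1/2) * B\<^sup>2"
proof (intro allI)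
  fix m v :: "real^'d"
  define P where "P = matrix_inv R"
  have P_nonneg: "0 \<le> wnorm2 z P" for z
    unfolding P_def using symmetric_pd_inverse_nonneg[OF assms(1)] .
  have eps_bound: "wnorm2 eps P \<le> B\<^sup>2"
    using sqrt_le_D assms(6) unfolding P_def .
  have model_bound: "wnorm2 (G *v (m - v)) P \<le> alpha * wnorm2 (m - v) M"
    using loewner_le_wnorm2[OF assms(7), of "m - v"]
    unfolding wnorm2_congruence wnorm2_scaleR P_def .
  have residual_gap: "(rstar - G *v v) - (rstar - G *v m) = G *v (m - v)"
    by (simp add: matrix_vector_mult_diff_distrib)
  have shifted: "r - G *v u = (rstar - G *v u) - eps" for u
    using assms(3) by simp
  show "loss R G m r - loss R G v r
      \<le> loss R G m rstar - loss R G v rstar + alpha / 2 * wnorm2 (m - v) M + (1/2) * B\<^sup>2"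
    using wnorm2_shift_diff_le[OF P_nonneg, of "rstar - G *v m" eps "rstar - G *v v"]
      eps_bound model_bound
    unfolding loss_def shifted residual_gap P_def[symmetric] by linarith
qed

end
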